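(* Fix integers $t\geq 1$ and $r\geq 1$. Then, as $m\to\infty$ (with $m\geq r$), \[ R_t(r,m) \geq \left(1-\frac{1}{2^t}\right)2^m-\frac{\sqrt{2t(2^t-1) \ln 2}}{2^t\sqrt{r!}}\, m^{r/2}\,2^{m/2}(1+o(1)). \]
   Context: For a $t\times n$ matrix $\mathbf{v}$ over $\mathbb{F}_q$ with rows $\overline{v}_1,\dots,\overline{v}_t$, its $t$-weight is $\mathrm{wt}^{(t)}(\mathbf{v})=\left|\bigcup_{i=1}^t \mathrm{supp}(\overline{v}_i)\right|$, and $d^{(t)}(\mathbf{u},\mathbf{v})=\mathrm{wt}^{(t)}(\mathbf{u}-\mathbf{v})$. For a linear code $C\subseteq\mathbb{F}_q^n$ and $t\in\mathbb{N}$, let $C^t$ be the set of $t\times n$ matrices all of whose rows lie in $C$. The $t$-th generalized covering radius $R_t(C)$ is the smallest integer $\rho$ such that for every $\mathbf{v}\in\mathbb{F}_q^{t\times n}$ there is $\mathbf{c}\in C^t$ with $d^{(t)}(\mathbf{v},\mathbf{c})\leq \rho$. Binary Reed–Muller codes $\mathrm{RM}(r,m)\subseteq\mathbb{F}_2^{2^m}$ ($0\le r\le m$) are defined recursively: $\mathrm{RM}(0,m)=\{\overline{0},\overline{1}\}$, $\mathrm{RM}(m,m)=\mathbb{F}_2^{2^m}$, and for $1\leq r\leq m-1$, $\mathrm{RM}(r,m)=\{(\overline{u},\overline{u}+\overline{v}) : \overline{u}\in \mathrm{RM}(r,m-1),\ \overline{v}\in\mathrm{RM}(r-1,m-1)\}$.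 It is a linear code of length $2^m$ and dimension $\sum_{i=0}^r\binom{m}{i}$. Write $R_t(r,m)=R_t(\mathrm{RM}(r,m))$. *)

theory Defs
  imports Complex_Main
begin

text \<open>Binary words of length n are represented as bool lists (True = 1, False = 0);
  addition in F_2 is exclusive or, i.e. (\<noteq>).\<close>

fun RM :: "nat \<Rightarrow> nat \<Rightarrow> bool list set" where
  "RM 0 m = {replicate (2^m) False, replicate (2^m) True}"
| "RM (Suc r) m =
     (if m \<le> Suc r then {xs. length xs = 2^m}
      else {u @ map2 (\<noteq>) u v | u v. u \<in> RM (Suc r) (m - 1) \<and> v \<in> RM r (m - 1)})"

text \<open>A t x n matrix is a list of t rows, each a word of length n.
  t-distance: number of columns in which the two matrices differ
  (= t-weight of their difference).\<close>

definition tdist :: "nat \<Rightarrow> bool list list \<Rightarrow> bool list list \<Rightarrow> nat" where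
  "tdist n V W = card {j. j < n \<and> (\<exists>i < length V. V ! i ! j \<noteq> W ! i ! j)}"

definition gcr :: "nat \<Rightarrow> nat \<Rightarrow> bool list set \<Rightarrow> nat" where
  "gcr t n C = (LEAST \<rho>. \<forall>V. length V = t \<and> (\<forall>x \<in> set V. length x = n) \<longrightarrow>
      (\<exists>Cs. length Cs = t \<and> set Cs \<subseteq> C \<and> tdist n V Cs \<le> \<rho>))"

end

theory Submission
  imports Defs "HOL-Real_Asymp.Real_Asymp"
begin

(* Weighted sphere covering.  For fixed W, the sum over all t x n matrices V of x ^ d(V, W)
   factorises over the columns and equals (1 + (2^t - 1) x) ^ n.  If every V lies within
   distance rho of C^t, summing over the |C|^t centres gives
   2^(t n) x^rho <= |C|^t (1 + (2^t - 1) x)^n for 0 < x <= 1.  Putting x = 1 - s,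
   p = 1 - 2^-t, K = t ln |C| and expanding -ln (1 - s) to second order at
   s = sqrt (2 K / (n p (1 - p))) gives p n - rho <= sqrt (2 n p (1 - p) K) + 2 K / (1 - p).
   For RM(r, m) we have n = 2^m and log2 |C| = sum_{i <= r} (m choose i), which is at most
   m^r / r! (1 + r r! / m). *)

lemma sum_atMost_choose_Suc:
  "(\<Sum>i\<le>Suc r. Suc m choose i) = (\<Sum>i\<le>Suc r. m choose i) + (\<Sum>i\<le>r. m choose i)"
  by (induction r) auto

lemma sum_atMost_choose_full: "m \<le> r \<Longrightarrow> (\<Sum>i\<le>r. m choose i) = 2 ^ m"
  by (subst choose_row_sum [symmetric], rule sum.mono_neutral_right) auto

lemma sum_choose_le:
  assumes "1 \<le> m"
  shows "real (\<Sum>i\<le>r. m choose i) \<le> real m ^ r / fact r + real r * real m ^ (r - 1)"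
proof -
  have "(m choose r) * fact r \<le> m ^ r"
    by (rule binomial_fact_pow)
  then have "real (m choose r) * fact r \<le> real m ^ r"
    by (metis of_nat_fact of_nat_le_iff of_nat_mult of_nat_power)
  then have "real (m choose r) \<le> real m ^ r / fact r"
    by (simp add: field_simps)
  moreover have "real (m choose i) \<le> real m ^ (r - 1)" if "i < r" for i
  proof -
    have "m choose i \<le> m ^ i"
      by (cases "i \<le> m") (auto simp: binomial_le_pow binomial_eq_0)
    also have "\<dots> \<le> m ^ (r - 1)"
      using assms that by (intro power_increasing) auto
    finally show ?thesis
      by (metis of_nat_le_iff of_nat_power)
  qed
  then have "(\<Sum>i<r. real (m choose i)) \<le> real r * real m ^ (r - 1)"
    using sum_bounded_above[of "{..<r}" "\<lambda>i. real (m choose i)"] by simp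
  ultimately show ?thesis
    by (simp add: lessThan_Suc_atMost[symmetric])
qed

lemma finite_bool_lists: "finite {xs :: bool list. length xs = n}"
  using finite_lists_length_eq[of "UNIV :: bool set" n] by simp

lemma card_bool_lists: "card {xs :: bool list. length xs = n} = 2 ^ n"
  using card_lists_length_eq[of "UNIV :: bool set" n] by simp

declare RM.simps(2) [simp del]

lemma RM_Suc_eq_image:
  assumes "Suc r < m"
  shows "RM (Suc r) m = (\<lambda>(u, v). u @ map2 (\<noteq>) u v) ` (RM (Suc r) (m - 1) \<times> RM r (m - 1))"
  using assms unfolding RM.simps(2)[of r m] by auto

lemma RM_length: "xs \<in> RM r m \<Longrightarrow> length xs = 2 ^ m"
proof (induction r m arbitrary: xs rule: RM.induct)
  case (2 r m)
  show ?case
  proof (cases "m \<le> Suc r")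
    case True
    then show ?thesis using "2.prems" by (simp add: RM.simps(2))
  next
    case False
    then obtain u v where "xs = u @ map2 (\<noteq>) u v" "u \<in> RM (Suc r) (m - 1)" "v \<in> RM r (m - 1)"
      using "2.prems" RM_Suc_eq_image[of r m] by auto
    moreover have "2 ^ (m - 1) + 2 ^ (m - 1) = (2::nat) ^ m"
      using False by (cases m) auto
    ultimately show ?thesis using "2.IH" False by auto
  qed
qed auto

lemma finite_RM: "finite (RM r m)"
  by (rule finite_subset[OF _ finite_bool_lists]) (auto dest: RM_length)

lemma RM_nonempty: "RM r m \<noteq> {}"
proof (induction r m rule: RM.induct)
  case (2 r m)
  show ?case
  proof (cases "m \<le> Suc r")
    case True
    have "replicate (2 ^ m) False \<in> RM (Suc r) m"
      using True by (simp add: RM.simps(2))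
    then show ?thesis by blast
  next
    case False
    then show ?thesis using "2.IH" by (simp add: RM_Suc_eq_image)
  qed
qed simp

lemma card_RM_le: "card (RM r m) \<le> 2 ^ (\<Sum>i\<le>r. m choose i)"
proof (induction r m rule: RM.induct)
  case (1 m)
  then show ?case by (simp add: card_insert_if)
next
  case (2 r m)
  show ?case
  proof (cases "m \<le> Suc r")
    case True
    then show ?thesis
      using sum_atMost_choose_full[OF True] by (simp add: RM.simps(2) card_bool_lists)
  next
    case False
    then obtain m' where m: "m = Suc m'" by (cases m) auto
    have "card (RM (Suc r) m) \<le> card (RM (Suc r) m') * card (RM r m')"
      using False card_image_le[of "RM (Suc r) m' \<times> RM r m'" "\<lambda>(u, v). u @ map2 (\<noteq>) u v"]
      unfolding m by (simp add: RM_Suc_eq_image finite_RM)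
    also have "\<dots> \<le> 2 ^ (\<Sum>i\<le>Suc r. m' choose i) * 2 ^ (\<Sum>i\<le>r. m' choose i)"
      using "2.IH" False unfolding m by (intro mult_le_mono) auto
    also have "\<dots> = 2 ^ (\<Sum>i\<le>Suc r. m choose i)"
      unfolding m sum_atMost_choose_Suc by (simp add: power_add)
    finally show ?thesis .
  qed
qed

definition matrices :: "nat \<Rightarrow> nat \<Rightarrow> bool list list set" where
  "matrices t n = {V. length V = t \<and> (\<forall>x \<in> set V. length x = n)}"

lemma card_matrices: "card (matrices t n) = 2 ^ (t * n)"
proof -
  have "matrices t n = {V. set V \<subseteq> {x. length x = n} \<and> length V = t}"
    unfolding matrices_def by auto
  then show ?thesis
    by (simp add: card_lists_length_eq[OF finite_bool_lists] card_bool_lists power_mult mult.commute)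
qed

lemma bij_betw_add_column:
  "bij_betw (\<lambda>(c, V). map2 (#) c V) ({c. length c = t} \<times> matrices t n) (matrices t (Suc n))"
proof (rule bij_betw_byWitness[where f' = "\<lambda>V. (map hd V, map tl V)"])
  show "\<forall>p \<in> {c. length c = t} \<times> matrices t n.
      (\<lambda>V. (map hd V, map tl V)) ((\<lambda>(c, V). map2 (#) c V) p) = p"
    by (auto simp: matrices_def split_def comp_def)
  show "\<forall>V \<in> matrices t (Suc n). (\<lambda>(c, V). map2 (#) c V) (map hd V, map tl V) = V"
    by (auto simp: matrices_def map2_map_map intro!: map_idI hd_Cons_tl)
  show "(\<lambda>(c, V). map2 (#) c V) ` ({c. length c = t} \<times> matrices t n) \<subseteq> matrices t (Suc n)"
    by (auto simp: matrices_def dest!: set_zip_rightD)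
  show "(\<lambda>V. (map hd V, map tl V)) ` matrices t (Suc n) \<subseteq> {c. length c = t} \<times> matrices t n"
    by (auto simp: matrices_def)
qed

lemma tdist_add_column:
  assumes "length c = length V" "length w = length W" "length V = length W"
  shows "tdist (Suc n) (map2 (#) c V) (map2 (#) w W) = (if c = w then 0 else 1) + tdist n V W"
proof -
  define J where "J = {j. \<exists>i < length V. map2 (#) c V ! i ! j \<noteq> map2 (#) w W ! i ! j}"
  have J0: "0 \<in> J \<longleftrightarrow> c \<noteq> w"
    using assms by (auto simp: J_def list_eq_iff_nth_eq)
  have tail: "tdist n V W = card {j. Suc j \<in> J \<and> j < n}"
    unfolding tdist_def using assms by (intro arg_cong[where f = card]) (auto simp: J_def)
  have whole: "tdist (Suc n) (map2 (#) c V) (map2 (#) w W) = card {j \<in> J. j < Suc n}"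
    unfolding tdist_def using assms by (intro arg_cong[where f = card]) (auto simp: J_def)
  show ?thesis
    unfolding tail whole using J0 card_less_Suc[of J n] card_less_Suc2[of J n] by auto
qed

lemma sum_if_eq_else:
  fixes x :: "'a :: comm_ring_1"
  assumes "finite S" "w \<in> S"
  shows "(\<Sum>c \<in> S. if c = w then 1 else x) = 1 + (of_nat (card S) - 1) * x"
proof -
  have "(\<Sum>c \<in> S. if c = w then 1 else x) = (\<Sum>c \<in> S. x + (if c = w then 1 - x else 0))"
    by (rule sum.cong) auto
  then show ?thesis using assms by (simp add: sum.distrib algebra_simps)
qed

lemma sum_power_tdist:
  fixes x :: "'a :: comm_ring_1"
  assumes "W \<in> matrices t n"
  shows "(\<Sum>V \<in> matrices t n. x ^ tdist n V W) = (1 + (2 ^ t - 1) * x) ^ n"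
  using assms
proof (induction n arbitrary: W)
  case 0
  have "matrices t 0 = {replicate t []}"
    by (auto simp: matrices_def intro: replicate_eqI)
  then show ?case by (simp add: tdist_def)
next
  case (Suc n)
  let ?add_column = "\<lambda>(c, V). map2 (#) c V"
  let ?columns = "{c :: bool list. length c = t}"
  have "W \<in> ?add_column ` (?columns \<times> matrices t n)"
    using Suc.prems by (simp only: bij_betw_imp_surj_on[OF bij_betw_add_column])
  then obtain w W' where w: "length w = t" and W': "W' \<in> matrices t n" and W: "W = map2 (#) w W'"
    by auto
  have "(\<Sum>V \<in> matrices t (Suc n). x ^ tdist (Suc n) V W)
      = (\<Sum>p \<in> ?columns \<times> matrices t n. x ^ tdist (Suc n) (?add_column p) W)"
    by (rule sum.reindex_bij_betw[OF bij_betw_add_column, symmetric])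
  also have "\<dots> = (\<Sum>(c, V) \<in> ?columns \<times> matrices t n. (if c = w then 1 else x) * x ^ tdist n V W')"
    using w W' by (intro sum.cong) (auto simp: W tdist_add_column power_add matrices_def)
  also have "\<dots> = (\<Sum>c \<in> ?columns. if c = w then 1 else x) * (\<Sum>V \<in> matrices t n. x ^ tdist n V W')"
    by (simp add: sum_product sum.cartesian_product)
  also have "\<dots> = (1 + (2 ^ t - 1) * x) ^ Suc n"
    using w finite_bool_lists by (simp add: sum_if_eq_else card_bool_lists Suc.IH[OF W'])
  finally show ?case .
qed

lemma gcr_covers:
  assumes C: "C \<subseteq> {xs. length xs = n}" "C \<noteq> {}" and V: "V \<in> matrices t n"
  shows "\<exists>Cs. length Cs = t \<and> set Cs \<subseteq> C \<and> tdist n V Cs \<le> gcr t n C"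
proof -
  obtain c where "c \<in> C" using C by blast
  have "\<forall>V. length V = t \<and> (\<forall>x \<in> set V. length x = n) \<longrightarrow>
      (\<exists>Cs. length Cs = t \<and> set Cs \<subseteq> C \<and> tdist n V Cs \<le> n)"
  proof (intro allI impI exI[of _ "replicate t c"])
    fix V :: "bool list list"
    have "tdist n V (replicate t c) \<le> card {..<n}"
      unfolding tdist_def by (rule card_mono) auto
    then show "length (replicate t c) = t \<and> set (replicate t c) \<subseteq> C \<and> tdist n V (replicate t c) \<le> n"
      using \<open>c \<in> C\<close> by (auto simp: in_set_replicate)
  qed
  then have "\<forall>V. length V = t \<and> (\<forall>x \<in> set V. length x = n) \<longrightarrow>
      (\<exists>Cs. length Cs = t \<and> set Cs \<subseteq> C \<and> tdist n V Cs \<le> gcr t n C)"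
    unfolding gcr_def by (rule LeastI)
  then show ?thesis
    using V unfolding matrices_def by blast
qed

lemma gcr_covering_bound:
  fixes x :: real
  assumes C: "C \<subseteq> {xs. length xs = n}" "C \<noteq> {}" "finite C" and x: "0 < x" "x \<le> 1"
  shows "2 ^ (t * n) * x ^ gcr t n C \<le> real (card C) ^ t * (1 + (2 ^ t - 1) * x) ^ n"
proof -
  define CS where "CS = {Cs. set Cs \<subseteq> C \<and> length Cs = t}"
  have finite_CS: "finite CS" and card_CS: "card CS = card C ^ t"
    unfolding CS_def using C(3) by (simp_all add: finite_lists_length_eq card_lists_length_eq)
  have CS_matrices: "Cs \<in> matrices t n" if "Cs \<in> CS" for Cs
    using that C(1) unfolding CS_def matrices_def by auto
  have "x ^ gcr t n C \<le> (\<Sum>Cs \<in> CS. x ^ tdist n V Cs)" if V: "V \<in> matrices t n" for V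
  proof -
    obtain Cs where "Cs \<in> CS" and "tdist n V Cs \<le> gcr t n C"
      using gcr_covers[OF C(1,2) V] unfolding CS_def by blast
    then have "x ^ gcr t n C \<le> x ^ tdist n V Cs"
      using x by (intro power_decreasing) auto
    also have "\<dots> \<le> (\<Sum>Cs \<in> CS. x ^ tdist n V Cs)"
      using \<open>Cs \<in> CS\<close> finite_CS x by (intro member_le_sum) auto
    finally show ?thesis .
  qed
  then have "2 ^ (t * n) * x ^ gcr t n C \<le> (\<Sum>V \<in> matrices t n. \<Sum>Cs \<in> CS. x ^ tdist n V Cs)"
    using sum_mono[of "matrices t n" "\<lambda>_. x ^ gcr t n C"] by (simp add: card_matrices)
  also have "\<dots> = (\<Sum>Cs \<in> CS. \<Sum>V \<in> matrices t n. x ^ tdist n V Cs)"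
    by (rule sum.swap)
  also have "\<dots> = real (card C) ^ t * (1 + (2 ^ t - 1) * x) ^ n"
    using card_CS by (simp add: sum_power_tdist CS_matrices)
  finally show ?thesis .
qed

lemma gcr_log_bound:
  fixes s k :: real
  assumes C: "C \<subseteq> {xs. length xs = n}" "C \<noteq> {}" "finite C" "card C \<le> 2 powr k"
    and s: "0 \<le> s" "s < 1"
  shows "n * - ln (1 - (1 - 1 / 2 ^ t) * s) - t * k * ln 2 \<le> gcr t n C * - ln (1 - s)"
proof -
  define p :: real where "p = 1 - 1 / 2 ^ t"
  have "p * s \<le> s"
    using s by (simp add: p_def mult_left_le_one_le)
  then have ps: "0 < 1 - p * s" using s by simp
  have "1 + (2 ^ t - 1) * (1 - s) = 2 ^ t * (1 - p * s)"
    by (simp add: p_def algebra_simps)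
  then have "(2 ^ t) ^ n * (1 - s) ^ gcr t n C \<le> (2 ^ t) ^ n * (real (card C) ^ t * (1 - p * s) ^ n)"
    using gcr_covering_bound[OF C(1-3), of "1 - s" t] s
    by (simp add: power_mult power_mult_distrib mult.left_commute)
  then have "(1 - s) ^ gcr t n C \<le> real (card C) ^ t * (1 - p * s) ^ n"
    by simp
  also have "\<dots> \<le> (2 powr k) ^ t * (1 - p * s) ^ n"
    using C(4) ps by (intro mult_right_mono power_mono) auto
  finally have "ln ((1 - s) ^ gcr t n C) \<le> ln ((2 powr k) ^ t * (1 - p * s) ^ n)"
    using s ps by (subst ln_le_cancel_iff) auto
  then show ?thesis
    using s ps by (simp add: ln_mult ln_realpow ln_powr p_def algebra_simps)
qed

lemma minus_ln_one_minus_le: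
  fixes s :: real
  assumes "0 \<le> s" "s \<le> 1 / 2"
  shows "- ln (1 - s) \<le> s + s\<^sup>2 / 2 + s ^ 3"
proof -
  define f where "f y = ln (1 - y) + y + y\<^sup>2 / 2 + y ^ 3" for y :: real
  have "f 0 \<le> f s"
  proof (rule DERIV_nonneg_imp_nondecreasing[OF assms(1)])
    fix y :: real
    assume y: "0 \<le> y" "y \<le> s"
    then have "y < 1" using assms by simp
    then have "DERIV f y :> y\<^sup>2 * (2 - 3 * y) / (1 - y)"
      unfolding f_def
      by (auto intro!: derivative_eq_intros simp: field_simps power2_eq_square power3_eq_cube)
    moreover have "y\<^sup>2 * (2 - 3 * y) / (1 - y) \<ge> 0"
      using y assms \<open>y < 1\<close> by simp
    ultimately show "\<exists>d. DERIV f y :> d \<and> d \<ge> 0" by blast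
  qed
  then show ?thesis unfolding f_def by simp
qed

lemma minus_ln_one_minus_ge:
  fixes s :: real
  assumes "0 \<le> s" "s < 1"
  shows "s + s\<^sup>2 / 2 \<le> - ln (1 - s)"
proof -
  define f where "f y = - ln (1 - y) - y - y\<^sup>2 / 2" for y :: real
  have "f 0 \<le> f s"
  proof (rule DERIV_nonneg_imp_nondecreasing[OF assms(1)])
    fix y :: real
    assume y: "0 \<le> y" "y \<le> s"
    then have "y < 1" using assms by simp
    then have "DERIV f y :> y\<^sup>2 / (1 - y)"
      unfolding f_def by (auto intro!: derivative_eq_intros simp: field_simps power2_eq_square)
    moreover have "y\<^sup>2 / (1 - y) \<ge> 0"
      using \<open>y < 1\<close> by simp
    ultimately show "\<exists>d. DERIV f y :> d \<and> d \<ge> 0" by blast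
  qed
  then show ?thesis unfolding f_def by simp
qed

lemma deficit_le_of_log_bound_at:
  fixes n p K \<rho> s :: real
  assumes p: "0 < p" "p < 1" and "0 \<le> n" "0 \<le> K" "0 \<le> \<rho>" and s: "0 < s" "s \<le> 1 / 2"
    and log_bound: "n * - ln (1 - p * s) - K \<le> \<rho> * - ln (1 - s)"
  shows "p * n - \<rho> \<le> n * p * (1 - p) * s / 2 + n * p * s\<^sup>2 + K / s"
proof -
  define U where "U = s + s\<^sup>2 / 2 + s ^ 3"
  have "p * s \<le> s"
    using p s by (simp add: mult_left_le_one_le)
  then have "p * s < 1"
    using s by linarith
  then have "p * s + (p * s)\<^sup>2 / 2 \<le> - ln (1 - p * s)"
    using p s by (auto intro!: minus_ln_one_minus_ge)
  then have "n * (p * s + (p * s)\<^sup>2 / 2) - K \<le> n * - ln (1 - p * s) - K"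
    using \<open>0 \<le> n\<close> by (intro diff_right_mono mult_left_mono) auto
  also have "\<dots> \<le> \<rho> * - ln (1 - s)"
    by (rule log_bound)
  also have "\<dots> \<le> \<rho> * U"
    unfolding U_def using minus_ln_one_minus_le[of s] s \<open>0 \<le> \<rho>\<close> by (intro mult_left_mono) auto
  finally have "(p * n - \<rho>) * U \<le> n * p * (1 - p) * s\<^sup>2 / 2 + n * p * s ^ 3 + K"
    unfolding U_def by (simp add: algebra_simps power2_eq_square power3_eq_cube diff_divide_distrib)
  moreover have "(p * n - \<rho>) * s \<le> max 0 ((p * n - \<rho>) * U)"
    unfolding U_def using s by (cases "p * n - \<rho> \<le> 0") (auto simp: mult_le_0_iff)
  moreover have "0 \<le> n * p * (1 - p) * s\<^sup>2 / 2 + n * p * s ^ 3 + K"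
    using \<open>0 \<le> n\<close> \<open>0 \<le> K\<close> p s by simp
  ultimately have "(p * n - \<rho>) * s \<le> n * p * (1 - p) * s\<^sup>2 / 2 + n * p * s ^ 3 + K"
    by linarith
  then show ?thesis
    using s by (simp add: field_simps power2_eq_square power3_eq_cube)
qed

lemma deficit_le_of_log_bound:
  fixes n p K \<rho> :: real
  assumes p: "0 < p" "p < 1" and K: "0 < K" "8 * K \<le> n * p * (1 - p)" and "0 \<le> \<rho>"
    and log_bound: "\<And>s. 0 \<le> s \<Longrightarrow> s < 1 \<Longrightarrow> n * - ln (1 - p * s) - K \<le> \<rho> * - ln (1 - s)"
  shows "p * n - \<rho> \<le> sqrt (2 * n * p * (1 - p) * K) + 2 * K / (1 - p)"
proof -
  define q where "q = 1 - p"
  define w where "w = sqrt (2 * n * p * q * K)"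
  \<comment> \<open>s = sqrt (2 K / (n p q)) balances the two leading terms of the bound at s.\<close>
  define s where "s = 2 * K / w"
  have npq: "0 < n * p * q"
    using K unfolding q_def by linarith
  then have "0 < n"
    using p unfolding q_def by (simp add: zero_less_mult_iff)
  have w: "0 < w" "w\<^sup>2 = 2 * n * p * q * K"
    unfolding w_def using npq K by auto
  have s: "0 < s" "n * p * q * s\<^sup>2 = 2 * K"
    unfolding s_def using w K by (auto simp: field_simps power2_eq_square)
  have "(4 * K)\<^sup>2 = 2 * K * (8 * K)"
    by (simp add: power2_eq_square)
  also have "\<dots> \<le> 2 * K * (n * p * q)"
    using K unfolding q_def by (intro mult_left_mono) auto
  also have "\<dots> = w\<^sup>2"
    using w(2) by simp
  finally have "4 * K \<le> w"
    using w(1) by (auto intro: power2_le_imp_le)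
  then have "s \<le> 1 / 2"
    unfolding s_def using w by (simp add: field_simps)
  then have "p * n - \<rho> \<le> n * p * q * s / 2 + n * p * s\<^sup>2 + K / s"
    unfolding q_def using p K \<open>0 < n\<close> \<open>0 \<le> \<rho>\<close> s log_bound
    by (intro deficit_le_of_log_bound_at) auto
  also have "n * p * q * s / 2 = K / s"
    using s by (simp add: field_simps power2_eq_square)
  also have "n * p * s\<^sup>2 = n * p * q * s\<^sup>2 / q"
    using p unfolding q_def by simp
  also have "\<dots> = 2 * K / q"
    using s(2) by simp
  also have "K / s + 2 * K / q + K / s = 2 * K / s + 2 * K / q"
    by simp
  also have "\<dots> = w + 2 * K / q"
    using w K unfolding s_def by simp
  finally show ?thesis unfolding w_def q_def .
qed

lemma gcr_deficit_le:
  fixes k :: real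
  assumes "1 \<le> t" and C: "C \<subseteq> {xs. length xs = n}" "C \<noteq> {}" "finite C" "card C \<le> 2 powr k"
    and k: "0 < k" "k \<le> (2 ^ t - 1) / (8 * 4 ^ t * real t * ln 2) * real n"
  shows "(1 - 1 / 2 ^ t) * real n - gcr t n C
    \<le> sqrt (2 * real t * (2 ^ t - 1) * ln 2 * real n * k) / 2 ^ t + 2 ^ (t + 1) * real t * ln 2 * k"
proof -
  define p :: real where "p = 1 - 1 / 2 ^ t"
  define K where "K = real t * k * ln 2"
  have "(2 :: real) ^ 1 \<le> 2 ^ t"
    using \<open>1 \<le> t\<close> by (intro power_increasing) auto
  then have p: "0 < p" "p < 1" and pq: "p * (1 - p) = (2 ^ t - 1) / (2 ^ t)\<^sup>2"
    unfolding p_def by (auto simp: field_simps power2_eq_square)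
  have "0 < K"
    unfolding K_def using \<open>1 \<le> t\<close> k by simp
  moreover have "8 * K \<le> real n * p * (1 - p)"
    using k(2) \<open>1 \<le> t\<close> unfolding K_def mult.assoc pq
    by (simp add: field_simps power_mult_distrib[symmetric] power2_eq_square)
  moreover have "real n * - ln (1 - p * s) - K \<le> gcr t n C * - ln (1 - s)" if "0 \<le> s" "s < 1" for s
    using gcr_log_bound[OF C that] unfolding p_def K_def by simp
  ultimately have "p * real n - gcr t n C \<le> sqrt (2 * real n * p * (1 - p) * K) + 2 * K / (1 - p)"
    using p by (intro deficit_le_of_log_bound) auto
  also have "2 * real n * p * (1 - p) * K = p * (1 - p) * (2 * real n * K)"
    by (simp add: algebra_simps)
  also have "\<dots> = (2 * real t * (2 ^ t - 1) * ln 2 * real n * k) / (2 ^ t)\<^sup>2"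
    unfolding pq K_def by (simp add: field_simps)
  also have "sqrt \<dots> = sqrt (2 * real t * (2 ^ t - 1) * ln 2 * real n * k) / 2 ^ t"
    by (simp add: real_sqrt_divide)
  also have "2 * K / (1 - p) = 2 ^ (t + 1) * real t * ln 2 * k"
    unfolding p_def K_def by simp
  finally show ?thesis
    unfolding p_def by simp
qed

lemma sqrt_power_eq_powr:
  fixes x :: real
  assumes "0 < x"
  shows "sqrt (x ^ n) = x powr (real n / 2)"
  using assms by (simp add: powr_half_sqrt[symmetric] powr_realpow[symmetric] powr_powr)

lemma card_RM_le_powr:
  assumes "1 \<le> m"
  shows "card (RM r m) \<le> 2 powr (real m ^ r / fact r + real r * real m ^ (r - 1))"
proof -
  have "real (card (RM r m)) \<le> 2 ^ (\<Sum>i\<le>r. m choose i)"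
    using card_RM_le[of r m] by (metis of_nat_le_iff of_nat_numeral of_nat_power)
  also have "\<dots> = 2 powr real (\<Sum>i\<le>r. m choose i)"
    by (rule powr_realpow[symmetric]) simp
  also have "\<dots> \<le> 2 powr (real m ^ r / fact r + real r * real m ^ (r - 1))"
    using sum_choose_le[OF assms] by (intro powr_mono) auto
  finally show ?thesis .
qed

lemma RM_deficit_le:
  fixes t r m :: nat
  defines "C0 \<equiv> sqrt (2 * real t * (2 ^ t - 1) * ln 2) / (2 ^ t * sqrt (fact r))"
    and "a \<equiv> 2 ^ (t + 1) * real t * ln 2"
    and "b \<equiv> real m ^ r / fact r + real r * real m ^ (r - 1)"
  assumes "1 \<le> t" "1 \<le> r" "1 \<le> m"
    and small: "b / 2 powr (real m / 2) \<le> (2 ^ t - 1) / (8 * 4 ^ t * real t * ln 2)"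
  shows "(1 - 1 / 2 ^ t) * 2 ^ m - gcr t (2 ^ m) (RM r m)
    \<le> C0 * real m powr (real r / 2) * 2 powr (real m / 2)
      * (sqrt (1 + real r * fact r / real m) + a / C0 * (b / 2 powr (real m / 2)))"
proof -
  have "(1 :: real) < 2 ^ t"
    using \<open>1 \<le> t\<close> by (simp add: one_less_power)
  then have "0 < C0"
    using \<open>1 \<le> t\<close> by (simp add: C0_def)
  have "real m ^ r = real m * real m ^ (r - 1)"
    using \<open>1 \<le> r\<close> by (simp flip: power_Suc)
  then have b: "b = real m ^ r / fact r * (1 + real r * fact r / real m)"
    unfolding b_def using \<open>1 \<le> m\<close> by (simp add: field_simps)
  then have "0 < b"
    using \<open>1 \<le> m\<close> by (simp add: add_pos_nonneg)
  have "0 < (2 ^ t - 1) / (8 * 4 ^ t * real t * ln 2)"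
    using \<open>1 < 2 ^ t\<close> \<open>1 \<le> t\<close> by simp
  have "b \<le> (2 ^ t - 1) / (8 * 4 ^ t * real t * ln 2) * 2 powr (real m / 2)"
    using small by (simp add: divide_le_eq)
  also have "\<dots> \<le> (2 ^ t - 1) / (8 * 4 ^ t * real t * ln 2) * 2 ^ m"
    using \<open>0 < (2 ^ t - 1) / _\<close> by (intro mult_left_mono) (auto simp: powr_mono simp flip: powr_realpow)
  finally have "(1 - 1 / 2 ^ t) * 2 ^ m - gcr t (2 ^ m) (RM r m)
      \<le> sqrt (2 * real t * (2 ^ t - 1) * ln 2 * 2 ^ m * b) / 2 ^ t + a * b"
    using gcr_deficit_le[of t "RM r m" "2 ^ m" b] card_RM_le_powr[OF \<open>1 \<le> m\<close>, of r]
      \<open>1 \<le> t\<close> \<open>0 < b\<close>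
    by (simp add: RM_length RM_nonempty finite_RM subset_iff a_def b_def)
  also have "sqrt (2 * real t * (2 ^ t - 1) * ln 2 * 2 ^ m * b) / 2 ^ t
      = C0 * real m powr (real r / 2) * 2 powr (real m / 2) * sqrt (1 + real r * fact r / real m)"
    using \<open>1 \<le> m\<close> unfolding b C0_def
    by (simp add: real_sqrt_mult real_sqrt_divide sqrt_power_eq_powr mult.commute)
  also have "a * b = C0 * 2 powr (real m / 2) * (a / C0 * (b / 2 powr (real m / 2)))"
    using \<open>0 < C0\<close> by simp
  also have "\<dots> \<le> C0 * real m powr (real r / 2) * 2 powr (real m / 2) * (a / C0 * (b / 2 powr (real m / 2)))"
    using \<open>1 \<le> m\<close> \<open>0 < C0\<close> \<open>0 < b\<close>
    by (intro mult_right_mono) (auto simp: a_def ge_one_powr_ge_zero)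
  finally show ?thesis
    by (simp add: algebra_simps)
qed

lemma tendsto_powr_div_two_powr_half: "(\<lambda>m. real m powr a / 2 powr (real m / 2)) \<longlonglongrightarrow> 0"
  by real_asymp

lemma tendsto_power_div_two_powr_half: "(\<lambda>m. real m ^ j / 2 powr (real m / 2)) \<longlonglongrightarrow> 0"
proof -
  have "eventually (\<lambda>m. real m powr real j / 2 powr (real m / 2)
      = real m ^ j / 2 powr (real m / 2)) sequentially"
    using eventually_gt_at_top[of 0] by eventually_elim (simp add: powr_realpow)
  from tendsto_cong[OF this] show ?thesis
    using tendsto_powr_div_two_powr_half[of "real j"] by (rule iffD1)
qed

lemma tendsto_binomial_bound_div_two_powr_half:
  "(\<lambda>m. (real m ^ r / fact r + real r * real m ^ (r - 1)) / 2 powr (real m / 2)) \<longlonglongrightarrow> 0"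
proof -
  have "(\<lambda>m. 1 / fact r * (real m ^ r / 2 powr (real m / 2))
      + real r * (real m ^ (r - 1) / 2 powr (real m / 2))) \<longlonglongrightarrow> 0"
    by (intro tendsto_add_zero tendsto_mult_right_zero tendsto_power_div_two_powr_half)
  then show ?thesis
    by (simp add: add_divide_distrib)
qed

lemma exists_vanishing_error:
  fixes \<delta> D u :: "nat \<Rightarrow> real"
  assumes "u \<longlonglongrightarrow> 0" "eventually (\<lambda>m. \<delta> m \<le> D m * (1 + u m)) sequentially"
    and D: "\<And>m. r \<le> m \<Longrightarrow> 0 < D m"
  shows "\<exists>g. g \<longlonglongrightarrow> 0 \<and> (\<forall>m \<ge> r. \<delta> m \<le> D m * (1 + g m))"
proof (intro exI conjI allI impI)
  define g where "g m = max (\<delta> m / D m - 1) (u m)" for m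
  have "eventually (\<lambda>m. u m = g m) sequentially"
    using assms(2) eventually_ge_at_top[of r]
  proof eventually_elim
    case (elim m)
    then have "\<delta> m / D m \<le> 1 + u m"
      using D[of m] by (simp add: pos_divide_le_eq mult.commute)
    then show ?case by (simp add: g_def)
  qed
  from tendsto_cong[OF this] show "g \<longlonglongrightarrow> 0"
    using assms(1) by (rule iffD1)
  fix m
  assume "r \<le> m"
  then have "\<delta> m = D m * (1 + (\<delta> m / D m - 1))"
    using D[of m] by simp
  also have "\<dots> \<le> D m * (1 + g m)"
    using \<open>r \<le> m\<close> D[of m] by (intro mult_left_mono) (auto simp: g_def)
  finally show "\<delta> m \<le> D m * (1 + g m)" .
qed

theorem theorem12:
  fixes t r :: nat
  assumes "t \<ge> 1" and "r \<ge> 1"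
  shows "\<exists>g :: nat \<Rightarrow> real. g \<longlonglongrightarrow> 0 \<and>
    (\<forall>m \<ge> r. real (gcr t (2^m) (RM r m)) \<ge>
        (1 - 1 / 2^t) * 2^m
        - sqrt (2 * real t * (2^t - 1) * ln 2) / (2^t * sqrt (fact r))
          * real m powr (real r / 2) * 2 powr (real m / 2) * (1 + g m))"
proof -
  define C0 :: real where "C0 = sqrt (2 * real t * (2 ^ t - 1) * ln 2) / (2 ^ t * sqrt (fact r))"
  define D where "D m = C0 * real m powr (real r / 2) * 2 powr (real m / 2)" for m :: nat
  define a :: real where "a = 2 ^ (t + 1) * real t * ln 2"
  define b where "b m = real m ^ r / fact r + real r * real m ^ (r - 1)" for m :: nat
  define u where "u m = sqrt (1 + real r * fact r / real m) + a / C0 * (b m / 2 powr (real m / 2)) - 1"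
    for m :: nat
  have "(1 :: real) < 2 ^ t"
    using \<open>t \<ge> 1\<close> by (simp add: one_less_power)
  then have D_pos: "0 < D m" if "r \<le> m" for m
    using that assms by (simp add: D_def C0_def)
  have "0 < (2 ^ t - 1) / (8 * 4 ^ t * real t * ln 2)"
    using \<open>1 < 2 ^ t\<close> \<open>t \<ge> 1\<close> by simp
  have b_lim: "(\<lambda>m. b m / 2 powr (real m / 2)) \<longlonglongrightarrow> 0"
    unfolding b_def by (rule tendsto_binomial_bound_div_two_powr_half)
  have "(\<lambda>m. sqrt (1 + real r * fact r / real m) - 1) \<longlonglongrightarrow> 0"
    by real_asymp
  then have "(\<lambda>m. sqrt (1 + real r * fact r / real m) - 1 + a / C0 * (b m / 2 powr (real m / 2)))
      \<longlonglongrightarrow> 0"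
    by (rule tendsto_add_zero[OF _ tendsto_mult_right_zero[OF b_lim]])
  then have "u \<longlonglongrightarrow> 0"
    unfolding u_def by (simp only: diff_add_eq)
  moreover have "eventually (\<lambda>m. (1 - 1 / 2 ^ t) * 2 ^ m - gcr t (2 ^ m) (RM r m) \<le> D m * (1 + u m))
      sequentially"
    using eventually_ge_at_top[of 1] order_tendstoD(2)[OF b_lim \<open>0 < (2 ^ t - 1) / _\<close>]
  proof eventually_elim
    case (elim m)
    then show ?case
      using RM_deficit_le[of t r m] assms unfolding C0_def D_def a_def b_def u_def by simp
  qed
  ultimately have "\<exists>g. g \<longlonglongrightarrow> 0 \<and>
      (\<forall>m \<ge> r. (1 - 1 / 2 ^ t) * 2 ^ m - gcr t (2 ^ m) (RM r m) \<le> D m * (1 + g m))"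
    using D_pos by (rule exists_vanishing_error)
  then show ?thesis
    unfolding D_def C0_def by (auto simp: algebra_simps)
qed

end
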